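(* Let $(X,d)$ be a separable metric space admitting a weak convergence. Then for all $p\ge1$ the map $M_p:(\mathcal{P}_{p-1}(X),\tau_{\mathrm{w}}^{p-1})\to(\mathrm{K}(X),\vec d\,)$ is continuous.
   Context: A convergence $c$ on a set $X$ is a rule assigning at most one point of $X$ as the "limit" of each sequence in $X$, such that whenever a sequence has limit $x$, every subsequence also has limit $x$. A convergence $w$ on $X$ is a weak convergence for $(X,d)$ if: (W1) whenever $\sup_n d(x_n,y)<\infty$ for some $y$, some subsequence converges in $w$ to some point of $X$; (W2) whenever $x_n\to x$ in $w$, $d(x,y)\le\liminf_n d(x_n,y)$ for all $y\in X$; (W3) whenever $x_n\to x$ in $w$ and $d(x_n,y)\to d(x,y)$ for some $y\in X$, then $d(x_n,x)\to0$. $(X,d)$ admits a weak convergence if such a $w$ exists. $\mathcal{P}_{p-1}(X)$ is the set of Borel probability measures $\mu$ on $(X,d)$ with $\int d^{p-1}(x,y)\,d\mu(y)<\infty$ for some (equivalently all) $x$; $\tau_{\mathrm{w}}^{p-1}$ is the topology on it in which $\mu_n\to\mu$ iff $\int f\,d\mu_n\to\int f\,d\mu$ for all bounded continuous $f$ and $\int d^{p-1}(x,y)\,d\mu_n(y)\to\int d^{p-1}(x,y)\,d\mu(y)$ for all $x\in X$. $W_p(\mu,x,x'):=\int_X(d^p(x,y)-d^p(x',y))\,d\mu(y)$ and $M_p(\mu):=\{x: W_p(\mu,x,x')\le0\ \forall x'\}$. $\mathrm{K}(X)$ is the set of non-empty $d$-compact subsets of $X$; $\vec d(S,S'):=\max_{x\in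 S}\min_{x'\in S'}d(x,x')$; the topology $\vec d$ on $\mathrm{K}(X)$ is the one generated by the sets $\vec B_r(S):=\{S'\in\mathrm{K}(X):\vec d(S',S)<r\}$, $S\in\mathrm{K}(X)$, $r\ge0$. *)

theory Defs
  imports "HOL-Probability.Probability"
begin

definition is_convergence :: "((nat \<Rightarrow> 'a) \<Rightarrow> 'a \<Rightarrow> bool) \<Rightarrow> bool" where
  "is_convergence c \<longleftrightarrow>
     (\<forall>xs x y. c xs x \<and> c xs y \<longrightarrow> x = y) \<and>
     (\<forall>xs x r. c xs x \<and> strict_mono (r :: nat \<Rightarrow> nat) \<longrightarrow> c (xs \<circ> r) x)"

definition is_weak_convergence :: "((nat \<Rightarrow> 'a::metric_space) \<Rightarrow> 'a \<Rightarrow> bool) \<Rightarrow> bool" where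
  "is_weak_convergence w \<longleftrightarrow> is_convergence w \<and>
     \<comment> \<open>(W1)\<close>
     (\<forall>xs. (\<exists>y. bdd_above (range (\<lambda>n. dist (xs n) y))) \<longrightarrow>
            (\<exists>r x. strict_mono (r :: nat \<Rightarrow> nat) \<and> w (xs \<circ> r) x)) \<and>
     \<comment> \<open>(W2)\<close>
     (\<forall>xs x. w xs x \<longrightarrow>
            (\<forall>y. ereal (dist x y) \<le> liminf (\<lambda>n. ereal (dist (xs n) y)))) \<and>
     \<comment> \<open>(W3)\<close>
     (\<forall>xs x y. w xs x \<and> (\<lambda>n. dist (xs n) y) \<longlonglongrightarrow> dist x y \<longrightarrow>
            (\<lambda>n. dist (xs n) x) \<longlonglongrightarrow> 0)"

definition admits_weak_convergence :: "'a::metric_space itself \<Rightarrow> bool" where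
  "admits_weak_convergence TYPE('a) \<longleftrightarrow> (\<exists>w :: (nat \<Rightarrow> 'a) \<Rightarrow> 'a \<Rightarrow> bool. is_weak_convergence w)"

definition separable_space :: "'a::metric_space itself \<Rightarrow> bool" where
  "separable_space TYPE('a) \<longleftrightarrow> (\<exists>D :: 'a set. countable D \<and> closure D = UNIV)"

text \<open>Power of the distance with the convention d^0 = 1 (Isabelle's powr has 0 powr 0 = 0).\<close>
definition dpow :: "'a::metric_space \<Rightarrow> 'a \<Rightarrow> real \<Rightarrow> real" where
  "dpow x y q = (if q = 0 then 1 else dist x y powr q)"

definition Pmom :: "real \<Rightarrow> ('a::metric_space) measure set" where
  "Pmom q = {M. prob_space M \<and> sets M = sets borel \<and>
                 (\<exists>x. (\<integral>\<^sup>+ y. ennreal (dpow x y q) \<partial>M) < \<infinity>)}"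

definition conv_wq :: "real \<Rightarrow> (nat \<Rightarrow> ('a::metric_space) measure) \<Rightarrow> 'a measure \<Rightarrow> bool" where
  "conv_wq q Ms M \<longleftrightarrow>
     (\<forall>f :: 'a \<Rightarrow> real. continuous_on UNIV f \<and> bounded (range f) \<longrightarrow>
        (\<lambda>n. integral\<^sup>L (Ms n) f) \<longlonglongrightarrow> integral\<^sup>L M f) \<and>
     (\<forall>x. (\<lambda>n. \<integral>y. dpow x y q \<partial>(Ms n)) \<longlonglongrightarrow> (\<integral>y. dpow x y q \<partial>M))"

definition Wp :: "real \<Rightarrow> ('a::metric_space) measure \<Rightarrow> 'a \<Rightarrow> 'a \<Rightarrow> real" where
  "Wp p M x x' = (\<integral>y. dist x y powr p - dist x' y powr p \<partial>M)"

definition Mp :: "real \<Rightarrow> ('a::metric_space) measure \<Rightarrow> 'a set" where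
  "Mp p M = {x. \<forall>x'. Wp p M x x' \<le> 0}"

definition Kset :: "('a::metric_space) set set" where
  "Kset = {S. S \<noteq> {} \<and> compact S}"

definition dvec :: "('a::metric_space) set \<Rightarrow> 'a set \<Rightarrow> real" where
  "dvec S S' = (SUP x\<in>S. INF x'\<in>S'. dist x x')"

definition dvec_ball :: "real \<Rightarrow> ('a::metric_space) set \<Rightarrow> 'a set set" where
  "dvec_ball r S = {S' \<in> Kset. dvec S' S < r}"

definition dvec_topology :: "('a::metric_space) set topology" where
  "dvec_topology = topology_generated_by {dvec_ball r S | r S. S \<in> Kset \<and> r \<ge> 0}"

end

(*
  For \<mu>\<^sub>n \<rightarrow> \<mu> in tau_w^{p-1}, let x\<^sub>n be approximate minimisers of W_p(\<mu>\<^sub>n, -, -). As p \<ge> 1,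
  d(x,y)^p - d(o,y)^p grows linearly in d(x,o) for y in a ball carrying most of the mass and is
  bounded below by -p d(x,o) d(o,y)^{p-1} elsewhere; convergence of the (p-1)-moments makes this
  uniform in n, so W_p(\<mu>\<^sub>n, -, o) is coercive and (x\<^sub>n) is bounded. By (W1) a subsequence
  converges weakly to some x. Integrals of continuous functions of growth O(1 + d^{p-1}) converge
  along \<mu>\<^sub>n, so with G(y) = liminf d(x\<^sub>n, y) a monotone approximation of G by tail infima gives
  \<integral> G^p - d(z,-)^p d\<mu> \<le> 0 for all z. By (W2) d(x,-) \<le> G, hence x \<in> M_p(\<mu>); for z = x the
  same inequality forces G(y) = d(x,y) for some y, and (W3) upgrades the weak convergence of a
  further subsequence to metric convergence. This sequential compactness shows that M_p(\<mu>) is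
  nonempty and compact and that M_p(\<mu>\<^sub>n) eventually lies in every neighbourhood of M_p(\<mu>),
  which is convergence for the topology generated by the sets vec_B_r(S).
*)
theory Submission
  imports Defs
begin

lemma powr_ge_tangent:
  fixes a b p :: real
  assumes "a \<ge> 0" "b \<ge> 0" "p \<ge> 1"
  shows "p * b powr (p - 1) * (a - b) \<le> a powr p - b powr p"
proof (cases "b = 0")
  case True
  then show ?thesis using assms by simp
next
  case False
  hence b: "b > 0" using assms by simp
  show ?thesis
  proof (cases "a = 0")
    case True
    have "b powr (p - 1) * b = b powr p" using b by (simp add: powr_diff field_simps)
    hence "p * b powr (p - 1) * (a - b) = - p * b powr p" using True by (simp add: algebra_simps)
    moreover have "b powr p \<le> p * b powr p" using assms mult_right_mono[of 1 p "b powr p"] by simp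
    ultimately show ?thesis using True assms by (simp add: mult.assoc)
  next
    case False
    hence a: "a > 0" using assms by simp
    show ?thesis
      using powr_convex[OF assms(3)] a b
      by (intro convex_on_imp_above_tangent[where A="{0<..}"])
        (auto simp: interior_open intro!: has_field_derivative_at_within has_real_derivative_powr)
  qed
qed

lemma powr_add_ge:
  fixes s t p :: real
  assumes "s \<ge> 0" "t \<ge> 0" "p \<ge> 1"
  shows "s powr p + t powr p \<le> (s + t) powr p"
proof -
  have split: "x powr p = x * x powr (p - 1)" if "x \<ge> 0" for x :: real
    using that assms by (cases "x = 0") (auto simp: powr_mult_base)
  have bound: "x powr p \<le> x * (s + t) powr (p - 1)" if "0 \<le> x" "x \<le> s + t" for x
    unfolding split[OF that(1)] using that assms by (intro mult_left_mono powr_mono2) auto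
  show ?thesis
    using bound[of s] bound[of t] split[of "s + t"] assms by (simp add: algebra_simps)
qed

lemma powr_add_le_two_powr:
  fixes b r q :: real
  assumes "b \<ge> 0" "r \<ge> 0" "q \<ge> 0"
  shows "(b + r) powr q \<le> 2 powr q * (b powr q + r powr q)"
proof -
  have "(b + r) powr q \<le> (2 * max b r) powr q" using assms by (intro powr_mono2) auto
  also have "\<dots> = 2 powr q * (max b r) powr q" using assms by (simp add: powr_mult)
  also have "\<dots> \<le> 2 powr q * (b powr q + r powr q)"
    using assms by (intro mult_left_mono) (auto simp: max_def)
  finally show ?thesis .
qed

lemma abs_powr_diff_le:
  fixes a b p R :: real
  assumes "a \<ge> 0" "b \<ge> 0" "p \<ge> 1" "\<bar>a - b\<bar> \<le> R"
  shows "\<bar>a powr p - b powr p\<bar> \<le> p * R * 2 powr (p - 1) * (R powr (p - 1) + b powr (p - 1))"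
proof -
  have R: "R \<ge> 0" using assms by linarith
  have "\<bar>a powr p - b powr p\<bar> \<le> p * \<bar>a - b\<bar> * (max a b) powr (p - 1)"
  proof (cases "b \<le> a")
    case True
    have "p * a powr (p - 1) * (b - a) \<le> b powr p - a powr p" by (rule powr_ge_tangent) (use assms in auto)
    moreover have "b powr p \<le> a powr p" using True assms by (intro powr_mono2) auto
    ultimately show ?thesis using True by (simp add: max_def algebra_simps)
  next
    case False
    have "p * b powr (p - 1) * (a - b) \<le> a powr p - b powr p" by (rule powr_ge_tangent) (use assms in auto)
    moreover have "a powr p \<le> b powr p" using False assms by (intro powr_mono2) auto
    ultimately show ?thesis using False by (simp add: max_def algebra_simps)
  qed
  also have "\<dots> \<le> p * R * (b + R) powr (p - 1)"
    using assms R by (intro mult_mono powr_mono2) auto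
  also have "\<dots> \<le> p * R * (2 powr (p - 1) * (b powr (p - 1) + R powr (p - 1)))"
    using assms R by (intro mult_left_mono powr_add_le_two_powr) auto
  finally show ?thesis by (simp add: algebra_simps)
qed

lemma LIMSEQ_by_approximation:
  fixes a :: "nat \<Rightarrow> real"
  assumes "\<And>e. e > 0 \<Longrightarrow> \<exists>u U d D. u \<longlonglongrightarrow> U \<and> d \<longlonglongrightarrow> D \<and> D < e \<and>
             (\<forall>n. \<bar>a n - u n\<bar> \<le> d n) \<and> \<bar>b - U\<bar> \<le> D"
  shows "a \<longlonglongrightarrow> b"
proof (rule LIMSEQ_I)
  fix e :: real assume "e > 0"
  then have "e / 3 > 0" by simp
  from assms[OF this] obtain u U d D where u: "u \<longlonglongrightarrow> U" and d: "d \<longlonglongrightarrow> D" and "D < e / 3"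
    and err: "\<And>n. \<bar>a n - u n\<bar> \<le> d n" "\<bar>b - U\<bar> \<le> D"
    by blast
  have "\<forall>\<^sub>F n in sequentially. dist (u n) U < e / 3"
    using u \<open>e > 0\<close> by (intro tendstoD) auto
  moreover have "\<forall>\<^sub>F n in sequentially. d n < e / 3"
    using order_tendstoD(2)[OF d \<open>D < e / 3\<close>] .
  ultimately have "\<forall>\<^sub>F n in sequentially. norm (a n - b) < e"
  proof eventually_elim
    case (elim n)
    have "\<bar>a n - u n\<bar> \<le> d n" by (fact err(1))
    then show ?case using elim err(2) \<open>D < e / 3\<close>
      unfolding dist_real_def real_norm_def abs_le_iff abs_less_iff by linarith
  qed
  then show "\<exists>N. \<forall>n\<ge>N. norm (a n - b) < e"
    by (simp add: eventually_sequentially)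
qed

lemma clamp_error_le:
  fixes u v Ca Cb K :: real
  assumes "\<bar>u\<bar> \<le> Ca + Cb * v" "Ca \<ge> 0" "Cb \<ge> 0" "K \<ge> 0"
  shows "\<bar>u - max (- (Ca + Cb * K)) (min (Ca + Cb * K) u)\<bar> \<le> Cb * (v - min v K)"
proof -
  have clamp: "\<bar>u - max (- c) (min c u)\<bar> = max 0 (\<bar>u\<bar> - c)" if "c \<ge> 0" for c
    using that by (simp add: max_def min_def abs_if)
  have "\<bar>u\<bar> - (Ca + Cb * K) \<le> Cb * (v - min v K)"
    using assms mult_left_mono[of K v Cb] mult_left_mono[of v K Cb] by (auto simp: min_def algebra_simps)
  moreover have "0 \<le> Cb * (v - min v K)" using assms by simp
  ultimately show ?thesis using clamp[of "Ca + Cb * K"] assms by simp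
qed

section \<open>Measures with finite moments\<close>

lemma dpow_nonneg: "dpow x y q \<ge> 0"
  by (simp add: dpow_def)

lemma continuous_on_dpow:
  assumes "q \<ge> 0"
  shows "continuous_on UNIV (\<lambda>y. dpow x y q)"
proof (cases "q = 0")
  case False
  then have "continuous_on UNIV (\<lambda>y. dist x y powr q)"
    using assms by (intro continuous_on_powr' continuous_intros) auto
  then show ?thesis using False by (simp add: dpow_def)
qed (simp add: dpow_def)

lemma abs_powr_diff_dist_le:
  assumes "p \<ge> 1" "a \<ge> 0" "\<bar>a - dist z y\<bar> \<le> R"
  shows "\<bar>a powr p - dist z y powr p\<bar> \<le>
    p * R * 2 powr (p - 1) * R powr (p - 1) + p * R * 2 powr (p - 1) * dpow z y (p - 1)"
proof -
  have "R \<ge> 0" using assms by linarith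
  have "\<bar>a powr p - dist z y powr p\<bar> \<le> p * R * 2 powr (p - 1) * (R powr (p - 1) + dist z y powr (p - 1))"
    using abs_powr_diff_le[OF assms(2) zero_le_dist assms(1,3)] .
  also have "\<dots> \<le> p * R * 2 powr (p - 1) * (R powr (p - 1) + dpow z y (p - 1))"
    using assms \<open>R \<ge> 0\<close> by (intro mult_left_mono add_left_mono) (auto simp: dpow_def)
  finally show ?thesis by (simp add: distrib_left)
qed

lemma dpow_le_two_powr:
  assumes "q \<ge> 0"
  shows "dpow z y q \<le> 2 powr q * (dpow x y q + dist z x powr q)"
proof (cases "q = 0")
  case False
  have "dist z y powr q \<le> (dist x y + dist z x) powr q"
    using assms dist_triangle[of z y x] by (intro powr_mono2) (auto simp: dist_commute)
  also have "\<dots> \<le> 2 powr q * (dist x y powr q + dist z x powr q)"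
    using assms by (intro powr_add_le_two_powr) auto
  finally show ?thesis using False by (simp add: dpow_def)
qed (simp add: dpow_def)

lemma Pmom_prob_space: "M \<in> Pmom q \<Longrightarrow> prob_space M"
  by (simp add: Pmom_def)

lemma borel_measurable_Pmom:
  assumes "M \<in> Pmom q" "continuous_on UNIV f"
  shows "f \<in> borel_measurable M"
  using assms measurable_cong_sets[of M borel] borel_measurable_continuous_onI
  by (auto simp: Pmom_def)

lemma integrable_Pmom_const: "M \<in> Pmom q \<Longrightarrow> integrable M (\<lambda>x. c :: real)"
  using Pmom_prob_space prob_space.finite_measure finite_measure.integrable_const by blast

lemma integrable_Pmom_bounded:
  assumes "M \<in> Pmom q" "f \<in> borel_measurable M" "\<And>y. \<bar>f y :: real\<bar> \<le> B"
  shows "integrable M f"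
  using assms Pmom_prob_space[OF assms(1)]
  by (intro finite_measure.integrable_const_bound[where B=B]) (auto simp: prob_space.finite_measure)

lemma integrable_Pmom_dpow:
  assumes "M \<in> Pmom q" "q \<ge> 0"
  shows "integrable M (\<lambda>y. dpow z y q)"
proof -
  obtain x where x: "(\<integral>\<^sup>+ y. ennreal (dpow x y q) \<partial>M) < \<infinity>"
    using assms(1) by (auto simp: Pmom_def)
  have "integrable M (\<lambda>y. dpow x y q)"
    using x borel_measurable_Pmom[OF assms(1) continuous_on_dpow[OF assms(2)]]
    by (intro integrableI_bounded) (auto simp: dpow_nonneg)
  then have "integrable M (\<lambda>y. 2 powr q * (dpow x y q + dist z x powr q))"
    using integrable_Pmom_const[OF assms(1)]
    by (intro integrable_mult_right Bochner_Integration.integrable_add)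
  then show ?thesis
  proof (rule Bochner_Integration.integrable_bound)
    show "(\<lambda>y. dpow z y q) \<in> borel_measurable M"
      using borel_measurable_Pmom[OF assms(1) continuous_on_dpow[OF assms(2)]] .
    show "AE y in M. norm (dpow z y q) \<le> norm (2 powr q * (dpow x y q + dist z x powr q))"
      using dpow_le_two_powr[OF assms(2), of z _ x] by (intro AE_I2) (auto simp: dpow_nonneg)
  qed
qed

lemma integrable_Pmom_growth:
  assumes "M \<in> Pmom q" "q \<ge> 0" "f \<in> borel_measurable M"
    and "\<And>y. \<bar>f y\<bar> \<le> A + B * dpow z y q"
  shows "integrable M f"
proof (rule Bochner_Integration.integrable_bound)
  show "integrable M (\<lambda>y. A + B * dpow z y q)"
    using integrable_Pmom_const[OF assms(1)] integrable_Pmom_dpow[OF assms(1,2)] by auto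
  show "AE y in M. norm (f y) \<le> norm (A + B * dpow z y q)"
    using assms(4) by (intro AE_I2) (auto intro: order_trans[OF _ abs_ge_self])
qed (fact assms(3))

lemma integrable_dist_powr_diff:
  assumes "p \<ge> 1" "M \<in> Pmom (p - 1)"
  shows "integrable M (\<lambda>y. dist x y powr p - dist z y powr p)"
proof (rule integrable_Pmom_growth[OF assms(2)])
  show "(\<lambda>y. dist x y powr p - dist z y powr p) \<in> borel_measurable M"
    using assms by (intro borel_measurable_Pmom[OF assms(2)] continuous_intros continuous_on_powr') auto
  fix y
  have "\<bar>dist x y - dist z y\<bar> \<le> dist x z"
    using dist_triangle[of x y z] dist_triangle[of z y x] by (auto simp: dist_commute)
  then show "\<bar>dist x y powr p - dist z y powr p\<bar> \<le>
    p * dist x z * 2 powr (p - 1) * dist x z powr (p - 1) + p * dist x z * 2 powr (p - 1) * dpow z y (p - 1)"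
    using abs_powr_diff_dist_le[OF assms(1) zero_le_dist] by blast
qed (use assms in simp)

lemma Wp_diff:
  assumes "p \<ge> 1" "M \<in> Pmom (p - 1)"
  shows "Wp p M x z = Wp p M x y - Wp p M z y"
  unfolding Wp_def
  by (subst Bochner_Integration.integral_diff[symmetric])
     (auto intro!: integrable_dist_powr_diff[OF assms] Bochner_Integration.integral_cong)

lemma conv_wq_subseq:
  assumes "conv_wq q Ms M" "strict_mono r"
  shows "conv_wq q (Ms \<circ> r) M"
proof -
  have "(\<lambda>n. X (r n)) \<longlonglongrightarrow> L" if "X \<longlonglongrightarrow> L" for X :: "nat \<Rightarrow> real" and L
    using LIMSEQ_subseq_LIMSEQ[OF that assms(2)] by (simp add: comp_def)
  then show ?thesis using assms(1) unfolding conv_wq_def by auto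
qed

lemma conv_wq_const: "conv_wq q (\<lambda>n. M) M"
  unfolding conv_wq_def by simp

lemma conv_wq_bounded:
  assumes "conv_wq q Ms M" "continuous_on UNIV f" "\<And>y. \<bar>f y :: real\<bar> \<le> B"
  shows "(\<lambda>n. \<integral>y. f y \<partial>Ms n) \<longlonglongrightarrow> (\<integral>y. f y \<partial>M)"
proof -
  have "bounded (range f)"
    unfolding bounded_iff using assms(3) by auto
  then show ?thesis using assms(1,2) unfolding conv_wq_def by auto
qed

lemma integral_clamp_error_le:
  fixes g :: "'a::metric_space \<Rightarrow> real"
  assumes N: "N \<in> Pmom q" and q: "q \<ge> 0" and g: "continuous_on UNIV g"
    and growth: "\<And>y. \<bar>g y\<bar> \<le> Ca + Cb * dpow z y q" and C: "Ca \<ge> 0" "Cb \<ge> 0" and K: "K \<ge> 0"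
  shows "\<bar>(\<integral>y. g y \<partial>N) - (\<integral>y. max (- (Ca + Cb * K)) (min (Ca + Cb * K) (g y)) \<partial>N)\<bar>
    \<le> Cb * ((\<integral>y. dpow z y q \<partial>N) - (\<integral>y. min (dpow z y q) K \<partial>N))"
proof -
  define T where "T y = max (- (Ca + Cb * K)) (min (Ca + Cb * K) (g y))" for y
  have "continuous_on UNIV T"
    unfolding T_def using g by (intro continuous_intros)
  moreover have "continuous_on UNIV (\<lambda>y. min (dpow z y q) K)"
    using continuous_on_dpow[OF q] by (intro continuous_intros)
  moreover have "\<bar>T y\<bar> \<le> \<bar>Ca + Cb * K\<bar>" "\<bar>min (dpow z y q) K\<bar> \<le> K" for y
    unfolding T_def using K dpow_nonneg[of z y q] by auto
  ultimately have int: "integrable N g" "integrable N T" "integrable N (\<lambda>y. dpow z y q)"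
      "integrable N (\<lambda>y. min (dpow z y q) K)"
    using integrable_Pmom_growth[OF N q borel_measurable_Pmom[OF N g] growth] integrable_Pmom_dpow[OF N q]
      integrable_Pmom_bounded[OF N borel_measurable_Pmom[OF N]] by blast+
  have "\<bar>(\<integral>y. g y \<partial>N) - (\<integral>y. T y \<partial>N)\<bar> = \<bar>\<integral>y. g y - T y \<partial>N\<bar>"
    using int by simp
  also have "\<dots> \<le> (\<integral>y. \<bar>g y - T y\<bar> \<partial>N)"
    by (rule integral_abs_bound)
  also have "\<dots> \<le> (\<integral>y. Cb * (dpow z y q - min (dpow z y q) K) \<partial>N)"
    using int growth C K unfolding T_def by (intro integral_mono clamp_error_le) auto
  also have "\<dots> = Cb * ((\<integral>y. dpow z y q \<partial>N) - (\<integral>y. min (dpow z y q) K \<partial>N))"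
    using int by simp
  finally show ?thesis unfolding T_def .
qed

lemma tendsto_integral_min_dpow:
  assumes M: "M \<in> Pmom q" and q: "q \<ge> 0"
  shows "(\<lambda>k. \<integral>y. min (dpow z y q) (real k) \<partial>M) \<longlonglongrightarrow> (\<integral>y. dpow z y q \<partial>M)"
proof (rule integral_dominated_convergence[where w="\<lambda>y. dpow z y q"])
  show "AE y in M. (\<lambda>k. min (dpow z y q) (real k)) \<longlonglongrightarrow> dpow z y q"
  proof (intro AE_I2 tendsto_eventually)
    fix y
    obtain k where "dpow z y q \<le> real k" using real_arch_simple by blast
    then show "\<forall>\<^sub>F k in sequentially. min (dpow z y q) (real k) = dpow z y q"
      unfolding eventually_sequentially by (intro exI[of _ k]) auto
  qed
  have "continuous_on UNIV (\<lambda>y. min (dpow z y q) (real k))" for k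
    using continuous_on_dpow[OF q] by (intro continuous_intros)
  then show "(\<lambda>y. dpow z y q) \<in> borel_measurable M" "(\<lambda>y. min (dpow z y q) (real k)) \<in> borel_measurable M" for k
    using borel_measurable_Pmom[OF M] continuous_on_dpow[OF q] by blast+
  show "AE y in M. norm (min (dpow z y q) (real k)) \<le> dpow z y q" for k
    by (auto intro!: AE_I2 simp: dpow_nonneg abs_le_iff)
qed (rule integrable_Pmom_dpow[OF M q])

lemma conv_wq_growth:
  fixes g :: "'a::metric_space \<Rightarrow> real"
  assumes q: "q \<ge> 0" and Ms: "\<And>n. Ms n \<in> Pmom q" and M: "M \<in> Pmom q" and conv: "conv_wq q Ms M"
    and g: "continuous_on UNIV g" and growth: "\<And>y. \<bar>g y\<bar> \<le> Ca + Cb * dpow z y q"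
    and C: "Ca \<ge> 0" "Cb \<ge> 0"
  shows "(\<lambda>n. \<integral>y. g y \<partial>Ms n) \<longlonglongrightarrow> (\<integral>y. g y \<partial>M)"
proof (rule LIMSEQ_by_approximation)
  \<comment> \<open>Clamp \<open>g\<close> at height \<open>Ca + Cb * K\<close>; the error is controlled by the part of the moment above \<open>K\<close>.\<close>
  define T where "T K y = max (- (Ca + Cb * K)) (min (Ca + Cb * K) (g y))" for K y
  define err where "err K N = Cb * ((\<integral>y. dpow z y q \<partial>N) - (\<integral>y. min (dpow z y q) K \<partial>N))" for K N
  fix e :: real assume "e > 0"
  have "(\<lambda>k. err (real k) M) \<longlonglongrightarrow> Cb * ((\<integral>y. dpow z y q \<partial>M) - (\<integral>y. dpow z y q \<partial>M))"
    unfolding err_def by (intro tendsto_intros tendsto_integral_min_dpow[OF M q])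
  then have "\<forall>\<^sub>F k in sequentially. err (real k) M < e"
    using \<open>e > 0\<close> by (intro order_tendstoD(2)) auto
  then obtain k where "err (real k) M < e"
    by (auto simp: eventually_sequentially)
  moreover have "(\<lambda>n. \<integral>y. T (real k) y \<partial>Ms n) \<longlonglongrightarrow> (\<integral>y. T (real k) y \<partial>M)"
    unfolding T_def using g
    by (intro conv_wq_bounded[OF conv, where B="\<bar>Ca + Cb * real k\<bar>"] continuous_intros) auto
  moreover have "(\<lambda>n. err (real k) (Ms n)) \<longlonglongrightarrow> err (real k) M"
  proof -
    have "(\<lambda>n. \<integral>y. dpow z y q \<partial>Ms n) \<longlonglongrightarrow> (\<integral>y. dpow z y q \<partial>M)"
      using conv by (simp add: conv_wq_def)
    moreover have "(\<lambda>n. \<integral>y. min (dpow z y q) (real k) \<partial>Ms n) \<longlonglongrightarrow> (\<integral>y. min (dpow z y q) (real k) \<partial>M)"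
      using continuous_on_dpow[OF q]
      by (intro conv_wq_bounded[OF conv, where B="real k"] continuous_intros) (auto simp: dpow_nonneg)
    ultimately show ?thesis unfolding err_def by (intro tendsto_intros)
  qed
  moreover have "\<bar>(\<integral>y. g y \<partial>N) - (\<integral>y. T (real k) y \<partial>N)\<bar> \<le> err (real k) N" if "N \<in> Pmom q" for N
    unfolding T_def err_def by (rule integral_clamp_error_le[OF that q g growth C]) simp
  ultimately show "\<exists>u U d D. u \<longlonglongrightarrow> U \<and> d \<longlonglongrightarrow> D \<and> D < e \<and>
      (\<forall>n. \<bar>(\<integral>y. g y \<partial>Ms n) - u n\<bar> \<le> d n) \<and> \<bar>(\<integral>y. g y \<partial>M) - U\<bar> \<le> D"
    using Ms M by blast
qed

section \<open>Coercivity of \<open>Wp\<close>\<close>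

lemma dist_powr_diff_ge:
  assumes "p \<ge> 1"
  shows "- (p * dist x z * dpow z y (p - 1)) \<le> dist x y powr p - dist z y powr p"
proof -
  have "dist z y powr (p - 1) \<le> dpow z y (p - 1)"
    using assms by (simp add: dpow_def)
  then have "p * dist z y powr (p - 1) * dist x z \<le> p * dpow z y (p - 1) * dist x z"
    using assms by (intro mult_right_mono mult_left_mono) auto
  then have "- (p * dist x z * dpow z y (p - 1)) \<le> p * dist z y powr (p - 1) * (- dist x z)"
    by (simp add: algebra_simps)
  also have "\<dots> \<le> p * dist z y powr (p - 1) * (dist x y - dist z y)"
    using assms dist_triangle[of z y x] by (intro mult_left_mono) (auto simp: dist_commute)
  also have "\<dots> \<le> dist x y powr p - dist z y powr p"
    using assms by (intro powr_ge_tangent) auto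
  finally show ?thesis .
qed

lemma dist_powr_diff_ge_near:
  assumes "p \<ge> 1" "dist z y \<le> \<rho>" "2 * \<rho> + 1 \<le> dist x z"
  shows "dist x z - 2 * \<rho> \<le> dist x y powr p - dist z y powr p"
proof -
  have gap: "dist x z - 2 * \<rho> \<le> dist x y - dist z y"
    using dist_triangle[of x z y] assms(2) by (simp add: dist_commute)
  then have "(dist x y - dist z y) powr 1 \<le> (dist x y - dist z y) powr p"
    using assms by (intro powr_mono) auto
  moreover have "dist z y powr p + (dist x y - dist z y) powr p \<le> dist x y powr p"
    using powr_add_ge[of "dist z y" "dist x y - dist z y" p] gap assms by simp
  ultimately show ?thesis using gap assms by simp
qed

definition cutoff :: "'a::metric_space \<Rightarrow> real \<Rightarrow> 'a \<Rightarrow> real" where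
  "cutoff z \<rho> y = max 0 (min 1 (\<rho> + 1 - dist z y))"

lemma cutoff_bounds: "0 \<le> cutoff z \<rho> y" "cutoff z \<rho> y \<le> 1"
  by (auto simp: cutoff_def)

lemma abs_cutoff_le_1: "\<bar>cutoff z \<rho> y\<bar> \<le> 1"
  by (auto simp: cutoff_def)

lemma abs_cutoff_mult_le: "\<bar>cutoff z \<rho> y * a\<bar> \<le> \<bar>a\<bar>" "\<bar>(1 - cutoff z \<rho> y) * a\<bar> \<le> \<bar>a\<bar>"
  using cutoff_bounds[of z \<rho> y] by (simp_all add: abs_mult mult_left_le_one_le)

lemma continuous_on_cutoff: "continuous_on UNIV (cutoff z \<rho>)"
  unfolding cutoff_def by (intro continuous_intros)

lemma eventually_cutoff_eq_1: "\<forall>\<^sub>F k in sequentially. cutoff z (real k) y = 1"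
proof -
  obtain k where "dist z y \<le> real k" using real_arch_simple by blast
  then show ?thesis
    unfolding eventually_sequentially cutoff_def by (intro exI[of _ k]) auto
qed

lemma dist_powr_diff_ge_cutoff:
  assumes "p \<ge> 1" "2 * (\<rho> + 1) + 1 \<le> dist x z"
  shows "cutoff z \<rho> y * (dist x z - 2 * (\<rho> + 1)) - p * dist x z * ((1 - cutoff z \<rho> y) * dpow z y (p - 1))
    \<le> dist x y powr p - dist z y powr p"
proof (cases "cutoff z \<rho> y = 0")
  case True
  then show ?thesis using dist_powr_diff_ge[OF assms(1)] by simp
next
  case False
  then have "dist z y \<le> \<rho> + 1" by (auto simp: cutoff_def max_def min_def split: if_splits)
  then have "cutoff z \<rho> y * (dist x z - 2 * (\<rho> + 1)) \<le> cutoff z \<rho> y * (dist x y powr p - dist z y powr p)"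
    using dist_powr_diff_ge_near[OF assms(1), of z y "\<rho> + 1" x] assms(2) cutoff_bounds
    by (intro mult_left_mono) auto
  moreover have "(1 - cutoff z \<rho> y) * (- (p * dist x z * dpow z y (p - 1)))
      \<le> (1 - cutoff z \<rho> y) * (dist x y powr p - dist z y powr p)"
    using dist_powr_diff_ge[OF assms(1)] cutoff_bounds by (intro mult_left_mono) auto
  ultimately show ?thesis by (simp add: algebra_simps)
qed

lemma Wp_ge:
  assumes p: "p \<ge> 1" and M: "M \<in> Pmom (p - 1)"
  shows "- (p * dist x z * (\<integral>y. dpow z y (p - 1) \<partial>M)) \<le> Wp p M x z"
proof -
  have "(\<integral>y. - (p * dist x z * dpow z y (p - 1)) \<partial>M) \<le> (\<integral>y. dist x y powr p - dist z y powr p \<partial>M)"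
  proof (rule integral_mono)
    show "integrable M (\<lambda>y. - (p * dist x z * dpow z y (p - 1)))"
      using integrable_Pmom_dpow[OF M] p by simp
    show "integrable M (\<lambda>y. dist x y powr p - dist z y powr p)"
      by (rule integrable_dist_powr_diff[OF p M])
  qed (rule dist_powr_diff_ge[OF p])
  then show ?thesis unfolding Wp_def by simp
qed

lemma integrable_cutoff_dpow:
  assumes "M \<in> Pmom q" "q \<ge> 0"
  shows "integrable M (cutoff z \<rho>)" "integrable M (\<lambda>y. cutoff z \<rho> y * dpow z y q)"
    "integrable M (\<lambda>y. (1 - cutoff z \<rho> y) * dpow z y q)"
proof -
  have "\<bar>cutoff z \<rho> y * dpow z y q\<bar> \<le> 0 + 1 * dpow z y q"
    "\<bar>(1 - cutoff z \<rho> y) * dpow z y q\<bar> \<le> 0 + 1 * dpow z y q" for y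
    using abs_cutoff_mult_le[of z \<rho> y "dpow z y q"] dpow_nonneg[of z y q] by simp_all
  moreover have "continuous_on UNIV (\<lambda>y. cutoff z \<rho> y * dpow z y q)"
    using continuous_on_cutoff continuous_on_dpow[OF assms(2)] by (intro continuous_intros)
  moreover have "continuous_on UNIV (\<lambda>y. (1 - cutoff z \<rho> y) * dpow z y q)"
    using continuous_on_cutoff continuous_on_dpow[OF assms(2)] by (intro continuous_intros)
  ultimately show "integrable M (cutoff z \<rho>)" "integrable M (\<lambda>y. cutoff z \<rho> y * dpow z y q)"
    "integrable M (\<lambda>y. (1 - cutoff z \<rho> y) * dpow z y q)"
    using integrable_Pmom_bounded[OF assms(1) borel_measurable_Pmom[OF assms(1) continuous_on_cutoff]
        abs_cutoff_le_1]
      integrable_Pmom_growth[OF assms borel_measurable_Pmom[OF assms(1)]]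
    by blast+
qed

lemma Wp_ge_cutoff:
  assumes p: "p \<ge> 1" and M: "M \<in> Pmom (p - 1)" and far: "2 * (\<rho> + 1) + 1 \<le> dist x z"
  shows "(dist x z - 2 * (\<rho> + 1)) * (\<integral>y. cutoff z \<rho> y \<partial>M)
     - p * dist x z * (\<integral>y. (1 - cutoff z \<rho> y) * dpow z y (p - 1) \<partial>M) \<le> Wp p M x z"
proof -
  note int = integrable_cutoff_dpow(1,3)[OF M, of z \<rho>]
  have "(dist x z - 2 * (\<rho> + 1)) * (\<integral>y. cutoff z \<rho> y \<partial>M)
     - p * dist x z * (\<integral>y. (1 - cutoff z \<rho> y) * dpow z y (p - 1) \<partial>M)
     = (\<integral>y. cutoff z \<rho> y * (dist x z - 2 * (\<rho> + 1))
          - p * dist x z * ((1 - cutoff z \<rho> y) * dpow z y (p - 1)) \<partial>M)"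
    using int p by (simp add: mult.commute)
  also have "\<dots> \<le> (\<integral>y. dist x y powr p - dist z y powr p \<partial>M)"
  proof (rule integral_mono)
    show "integrable M (\<lambda>y. cutoff z \<rho> y * (dist x z - 2 * (\<rho> + 1))
          - p * dist x z * ((1 - cutoff z \<rho> y) * dpow z y (p - 1)))"
      using int p by simp
    show "integrable M (\<lambda>y. dist x y powr p - dist z y powr p)"
      by (rule integrable_dist_powr_diff[OF p M])
  qed (rule dist_powr_diff_ge_cutoff[OF p far])
  finally show ?thesis unfolding Wp_def .
qed

lemma tendsto_integral_cutoff:
  assumes M: "M \<in> Pmom q" and f: "integrable M f"
  shows "(\<lambda>k. \<integral>y. cutoff z (real k) y * f y \<partial>M) \<longlonglongrightarrow> (\<integral>y. f y \<partial>M)"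
proof (rule integral_dominated_convergence[where w="\<lambda>y. \<bar>f y\<bar>"])
  show "f \<in> borel_measurable M" using f by auto
  then show "(\<lambda>y. cutoff z (real k) y * f y) \<in> borel_measurable M" for k
    using borel_measurable_Pmom[OF M continuous_on_cutoff] by measurable
  show "integrable M (\<lambda>y. \<bar>f y\<bar>)" using f by auto
  show "AE y in M. (\<lambda>k. cutoff z (real k) y * f y) \<longlonglongrightarrow> f y"
  proof (intro AE_I2 tendsto_eventually)
    fix y show "\<forall>\<^sub>F k in sequentially. cutoff z (real k) y * f y = f y"
      using eventually_cutoff_eq_1[of z y] by eventually_elim simp
  qed
  show "AE y in M. norm (cutoff z (real k) y * f y) \<le> \<bar>f y\<bar>" for k
    using abs_cutoff_mult_le(1) by (intro AE_I2) simp
qed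

lemma cutoff_concentration:
  assumes p: "p \<ge> 1" and M: "M \<in> Pmom (p - 1)"
  shows "\<exists>\<rho>\<ge>0. 3/4 < (\<integral>y. cutoff z \<rho> y \<partial>M) \<and>
           p * (\<integral>y. (1 - cutoff z \<rho> y) * dpow z y (p - 1) \<partial>M) < 1/4"
proof -
  have q: "p - 1 \<ge> 0" using p by simp
  define A where "A \<rho> = (\<integral>y. cutoff z \<rho> y \<partial>M)" for \<rho>
  define B where "B \<rho> = p * (\<integral>y. (1 - cutoff z \<rho> y) * dpow z y (p - 1) \<partial>M)" for \<rho>
  have "(\<lambda>k. \<integral>y. cutoff z (real k) y * 1 \<partial>M) \<longlonglongrightarrow> (\<integral>y. 1 \<partial>M)"
    by (rule tendsto_integral_cutoff[OF M integrable_Pmom_const[OF M]])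
  then have limA: "(\<lambda>k. A (real k)) \<longlonglongrightarrow> 1"
    using prob_space.prob_space[OF Pmom_prob_space[OF M]] by (simp add: A_def)
  have "B \<rho> = p * ((\<integral>y. dpow z y (p - 1) \<partial>M) - (\<integral>y. cutoff z \<rho> y * dpow z y (p - 1) \<partial>M))" for \<rho>
    using integrable_Pmom_dpow[OF M q] integrable_cutoff_dpow(2)[OF M q]
    unfolding B_def by (simp add: left_diff_distrib)
  moreover have "(\<lambda>k. p * ((\<integral>y. dpow z y (p - 1) \<partial>M) - (\<integral>y. cutoff z (real k) y * dpow z y (p - 1) \<partial>M)))
      \<longlonglongrightarrow> p * ((\<integral>y. dpow z y (p - 1) \<partial>M) - (\<integral>y. dpow z y (p - 1) \<partial>M))"
    by (intro tendsto_intros tendsto_integral_cutoff[OF M integrable_Pmom_dpow[OF M q]])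
  ultimately have limB: "(\<lambda>k. B (real k)) \<longlonglongrightarrow> 0" by simp
  have "\<forall>\<^sub>F k in sequentially. 3/4 < A (real k)" using limA by (rule order_tendstoD) simp
  moreover have "\<forall>\<^sub>F k in sequentially. B (real k) < 1/4" using limB by (rule order_tendstoD) simp
  ultimately have "\<forall>\<^sub>F k in sequentially. 3/4 < A (real k) \<and> B (real k) < 1/4"
    by (rule eventually_conj)
  then obtain k where "3/4 < A (real k)" "B (real k) < 1/4"
    by (auto simp: eventually_sequentially)
  then show ?thesis unfolding A_def B_def by (intro exI[of _ "real k"]) auto
qed

lemma conv_wq_concentration:
  assumes p: "p \<ge> 1" and Ms: "\<And>n. Ms n \<in> Pmom (p - 1)" and M: "M \<in> Pmom (p - 1)"
    and conv: "conv_wq (p - 1) Ms M"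
  shows "\<exists>\<rho>\<ge>0. \<exists>N. \<forall>n\<ge>N. 3/4 < (\<integral>y. cutoff z \<rho> y \<partial>Ms n) \<and>
           p * (\<integral>y. (1 - cutoff z \<rho> y) * dpow z y (p - 1) \<partial>Ms n) < 1/4"
proof -
  have q: "p - 1 \<ge> 0" using p by simp
  define A where "A \<rho> N = (\<integral>y. cutoff z \<rho> y \<partial>N)" for \<rho> N
  define B where "B \<rho> N = p * (\<integral>y. (1 - cutoff z \<rho> y) * dpow z y (p - 1) \<partial>N)" for \<rho> N
  obtain \<rho> where \<rho>: "\<rho> \<ge> 0" "3/4 < A \<rho> M" "B \<rho> M < 1/4"
    using cutoff_concentration[OF p M, of z] unfolding A_def B_def by blast
  have "(\<lambda>n. A \<rho> (Ms n)) \<longlonglongrightarrow> A \<rho> M"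
    unfolding A_def using abs_cutoff_le_1
    by (intro conv_wq_growth[where Ca=1 and Cb=0 and z=z, OF q Ms M conv continuous_on_cutoff]) auto
  moreover have "(\<lambda>n. B \<rho> (Ms n)) \<longlonglongrightarrow> B \<rho> M"
  proof -
    have "continuous_on UNIV (\<lambda>y. (1 - cutoff z \<rho> y) * dpow z y (p - 1))"
      using continuous_on_cutoff continuous_on_dpow[OF q] by (intro continuous_intros)
    moreover have "\<bar>(1 - cutoff z \<rho> y) * dpow z y (p - 1)\<bar> \<le> 0 + 1 * dpow z y (p - 1)" for y
      using abs_cutoff_mult_le(2)[of z \<rho> y "dpow z y (p - 1)"] dpow_nonneg[of z y "p - 1"] by simp
    ultimately show ?thesis
      unfolding B_def by (intro tendsto_intros conv_wq_growth[where Ca=0 and Cb=1 and z=z, OF q Ms M conv])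
        simp_all
  qed
  ultimately have "\<forall>\<^sub>F n in sequentially. 3/4 < A \<rho> (Ms n) \<and> B \<rho> (Ms n) < 1/4"
    using \<rho> by (intro eventually_conj order_tendstoD)
  then show ?thesis
    using \<rho>(1) unfolding A_def B_def eventually_sequentially by blast
qed

lemma Wp_coercive:
  assumes p: "p \<ge> 1" and Ms: "\<And>n. Ms n \<in> Pmom (p - 1)" and M: "M \<in> Pmom (p - 1)"
    and conv: "conv_wq (p - 1) Ms M"
  shows "\<exists>R N. \<forall>n\<ge>N. \<forall>x. R \<le> dist x z \<longrightarrow> 1/2 \<le> Wp p (Ms n) x z"
proof -
  obtain \<rho> N where \<rho>: "\<rho> \<ge> 0" and N: "\<And>n. n \<ge> N \<Longrightarrow>
      3/4 < (\<integral>y. cutoff z \<rho> y \<partial>Ms n) \<and> p * (\<integral>y. (1 - cutoff z \<rho> y) * dpow z y (p - 1) \<partial>Ms n) < 1/4"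
    using conv_wq_concentration[OF p Ms M conv, of z] by blast
  \<comment> \<open>With mass \<open>> 3/4\<close> near \<open>z\<close> and tail term \<open>< 1/4\<close>, \<open>Wp \<ge> (3/4) (r - 2 (\<rho> + 1)) - r / 4 \<ge> 1/2\<close>.\<close>
  have "1/2 \<le> Wp p (Ms n) x z" if n: "n \<ge> N" and far: "3 * (\<rho> + 1) + 1 \<le> dist x z" for n x
  proof -
    define r where "r = dist x z"
    have r: "r \<ge> 0" "2 * (\<rho> + 1) \<le> r" using far \<rho> unfolding r_def by auto
    have "(r - 2 * (\<rho> + 1)) * (3/4) \<le> (r - 2 * (\<rho> + 1)) * (\<integral>y. cutoff z \<rho> y \<partial>Ms n)"
      using N[OF n] r by (intro mult_left_mono) auto
    moreover have "r * (p * (\<integral>y. (1 - cutoff z \<rho> y) * dpow z y (p - 1) \<partial>Ms n)) \<le> r * (1/4)"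
      using N[OF n] r by (intro mult_left_mono) auto
    moreover have "(r - 2 * (\<rho> + 1)) * (\<integral>y. cutoff z \<rho> y \<partial>Ms n)
        - p * r * (\<integral>y. (1 - cutoff z \<rho> y) * dpow z y (p - 1) \<partial>Ms n) \<le> Wp p (Ms n) x z"
      using Wp_ge_cutoff[OF p Ms, of \<rho> x z n] far \<rho> unfolding r_def by simp
    ultimately show ?thesis using far unfolding r_def by (simp add: algebra_simps)
  qed
  then show ?thesis by blast
qed

section \<open>Lower semicontinuity along weak convergences\<close>

lemma weak_convergence_subseq:
  assumes "is_weak_convergence w" "w xs x" "strict_mono r"
  shows "w (xs \<circ> r) x"
proof -
  from assms(1) have "\<forall>xs x r. w xs x \<and> strict_mono (r :: nat \<Rightarrow> nat) \<longrightarrow> w (xs \<circ> r) x"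
    unfolding is_weak_convergence_def is_convergence_def by (elim conjE) assumption
  then show ?thesis using assms(2,3) by blast
qed

lemma weak_convergence_bounded_subseq:
  fixes xs :: "nat \<Rightarrow> 'a::metric_space"
  assumes "is_weak_convergence w" "bounded (range xs)"
  shows "\<exists>r x. strict_mono r \<and> w (xs \<circ> r) x"
proof -
  from assms(1) have W1: "\<forall>xs. (\<exists>y. bdd_above (range (\<lambda>n. dist (xs n) y))) \<longrightarrow>
      (\<exists>r x. strict_mono (r :: nat \<Rightarrow> nat) \<and> w (xs \<circ> r) x)"
    unfolding is_weak_convergence_def by (elim conjE) assumption
  from assms(2) obtain R where "\<forall>y\<in>range xs. dist (xs 0) y \<le> R"
    unfolding bounded_any_center[where a="xs 0"] by blast
  then have "bdd_above (range (\<lambda>n. dist (xs n) (xs 0)))"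
    by (intro bdd_aboveI[of _ R]) (auto simp: dist_commute)
  then show ?thesis using W1[rule_format, of xs] by blast
qed

lemma weak_convergence_dist_le_liminf:
  assumes "is_weak_convergence w" "w xs x"
  shows "ereal (dist x y) \<le> liminf (\<lambda>n. ereal (dist (xs n) y))"
proof -
  from assms(1) have "\<forall>xs x. w xs x \<longrightarrow> (\<forall>y. ereal (dist x y) \<le> liminf (\<lambda>n. ereal (dist (xs n) y)))"
    unfolding is_weak_convergence_def by (elim conjE) assumption
  then show ?thesis using assms(2) by blast
qed

lemma weak_convergence_LIMSEQ:
  assumes "is_weak_convergence w" "w xs x" "(\<lambda>n. dist (xs n) y) \<longlonglongrightarrow> dist x y"
  shows "xs \<longlonglongrightarrow> x"
proof -
  from assms(1) have "\<forall>xs x y. w xs x \<and> (\<lambda>n. dist (xs n) y) \<longlonglongrightarrow> dist x y \<longrightarrow>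
      (\<lambda>n. dist (xs n) x) \<longlonglongrightarrow> 0"
    unfolding is_weak_convergence_def by (elim conjE) assumption
  then show ?thesis using assms(2,3) tendsto_dist_iff by blast
qed

definition tail_inf_dist :: "(nat \<Rightarrow> 'a::metric_space) \<Rightarrow> nat \<Rightarrow> 'a \<Rightarrow> real" where
  "tail_inf_dist xs N y = (INF n\<in>{N..}. dist (xs n) y)"

text \<open>For bounded sequences this is \<open>liminf\<^sub>n dist (xs n) y\<close> (see \<open>liminf_ereal_dist\<close>);
  for unbounded ones the supremum is a junk value.\<close>
definition liminf_dist :: "(nat \<Rightarrow> 'a::metric_space) \<Rightarrow> 'a \<Rightarrow> real" where
  "liminf_dist xs y = (SUP N. tail_inf_dist xs N y)"

lemma tail_inf_dist_le: "N \<le> n \<Longrightarrow> tail_inf_dist xs N y \<le> dist (xs n) y"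
  unfolding tail_inf_dist_def by (rule cINF_lower) (auto intro: bdd_belowI[of _ 0])

lemma tail_inf_dist_greatest: "(\<And>n. N \<le> n \<Longrightarrow> c \<le> dist (xs n) y) \<Longrightarrow> c \<le> tail_inf_dist xs N y"
  unfolding tail_inf_dist_def by (rule cINF_greatest) auto

lemma tail_inf_dist_nonneg: "0 \<le> tail_inf_dist xs N y"
  by (rule tail_inf_dist_greatest) simp

lemma tail_inf_dist_mono: "N \<le> N' \<Longrightarrow> tail_inf_dist xs N y \<le> tail_inf_dist xs N' y"
  by (intro tail_inf_dist_greatest tail_inf_dist_le) simp

lemma lipschitz_tail_inf_dist: "1-lipschitz_on UNIV (tail_inf_dist xs N)"
proof (rule lipschitz_onI)
  have le: "tail_inf_dist xs N y \<le> tail_inf_dist xs N y' + dist y y'" for y y'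
  proof -
    have "tail_inf_dist xs N y - dist y y' \<le> tail_inf_dist xs N y'"
    proof (rule tail_inf_dist_greatest)
      fix n assume "N \<le> n"
      then have "tail_inf_dist xs N y \<le> dist (xs n) y" by (rule tail_inf_dist_le)
      then show "tail_inf_dist xs N y - dist y y' \<le> dist (xs n) y'"
        using dist_triangle[of "xs n" y y'] by (simp add: dist_commute)
    qed
    then show ?thesis by simp
  qed
  show "dist (tail_inf_dist xs N y) (tail_inf_dist xs N y') \<le> 1 * dist y y'" for y y'
    using le[of y y'] le[of y' y] by (simp add: dist_real_def dist_commute abs_le_iff)
qed simp

lemma abs_tail_inf_dist_diff_le:
  assumes "range xs \<subseteq> cball z R"
  shows "\<bar>tail_inf_dist xs N y - dist z y\<bar> \<le> R"
proof -
  have "dist z y - R \<le> tail_inf_dist xs N y"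
  proof (rule tail_inf_dist_greatest)
    fix n
    have "dist z (xs n) \<le> R" using assms by (metis mem_cball range_subsetD)
    then show "dist z y - R \<le> dist (xs n) y"
      using dist_triangle[of z y "xs n"] by (simp add: dist_commute)
  qed
  moreover have "tail_inf_dist xs N y \<le> dist z y + R"
  proof -
    have "dist z (xs N) \<le> R" using assms by (metis mem_cball range_subsetD)
    then show ?thesis
      using tail_inf_dist_le[of N N xs y] dist_triangle[of "xs N" y z] by (simp add: dist_commute)
  qed
  ultimately show ?thesis by simp
qed

lemma tail_inf_dist_LIMSEQ:
  assumes "range xs \<subseteq> cball z R"
  shows "(\<lambda>N. tail_inf_dist xs N y) \<longlonglongrightarrow> liminf_dist xs y"
  unfolding liminf_dist_def
proof (rule LIMSEQ_incseq_SUP)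
  show "bdd_above (range (\<lambda>N. tail_inf_dist xs N y))"
  proof (rule bdd_aboveI2)
    show "tail_inf_dist xs N y \<le> dist z y + R" for N
      using abs_tail_inf_dist_diff_le[OF assms, of N y] by simp
  qed
  show "incseq (\<lambda>N. tail_inf_dist xs N y)"
    by (simp add: incseq_def tail_inf_dist_mono)
qed

lemma abs_liminf_dist_diff_le:
  assumes "range xs \<subseteq> cball z R"
  shows "\<bar>liminf_dist xs y - dist z y\<bar> \<le> R"
proof -
  have "(\<lambda>N. \<bar>tail_inf_dist xs N y - dist z y\<bar>) \<longlonglongrightarrow> \<bar>liminf_dist xs y - dist z y\<bar>"
    by (intro tendsto_intros tail_inf_dist_LIMSEQ[OF assms])
  then show ?thesis
    using abs_tail_inf_dist_diff_le[OF assms] by (blast intro: LIMSEQ_le_const2)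
qed

lemma liminf_dist_nonneg:
  assumes "range xs \<subseteq> cball z R"
  shows "0 \<le> liminf_dist xs y"
  using tail_inf_dist_LIMSEQ[OF assms] tail_inf_dist_nonneg by (blast intro: LIMSEQ_le_const)

lemma liminf_ereal_dist:
  assumes "range xs \<subseteq> cball z R"
  shows "liminf (\<lambda>n. ereal (dist (xs n) y)) = ereal (liminf_dist xs y)"
proof -
  have tail: "(INF n\<in>{N..}. ereal (dist (xs n) y)) = ereal (tail_inf_dist xs N y)" for N
  proof -
    have "bdd_below ((\<lambda>n. dist (xs n) y) ` {N..})" by (auto intro: bdd_belowI[of _ 0])
    then show ?thesis using ereal_Inf' by (simp add: image_comp tail_inf_dist_def)
  qed
  have "(\<lambda>N. ereal (tail_inf_dist xs N y)) \<longlonglongrightarrow> (SUP N. ereal (tail_inf_dist xs N y))"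
    by (intro LIMSEQ_SUP) (simp add: incseq_def tail_inf_dist_mono)
  moreover have "(\<lambda>N. ereal (tail_inf_dist xs N y)) \<longlonglongrightarrow> ereal (liminf_dist xs y)"
    using tail_inf_dist_LIMSEQ[OF assms] by simp
  ultimately show ?thesis
    unfolding liminf_SUP_INF tail by (rule LIMSEQ_unique)
qed

lemma bounded_imp_subset_cball:
  assumes "bounded S"
  shows "\<exists>R\<ge>0. S \<subseteq> cball z R"
proof -
  obtain R where "R > 0" "S \<subseteq> ball z R"
    using bounded_subset_ballD[OF assms] by blast
  then show ?thesis using ball_subset_cball by (intro exI[of _ R]) auto
qed

lemma dist_le_liminf_dist:
  fixes xs :: "nat \<Rightarrow> 'a::metric_space"
  assumes "is_weak_convergence w" "w xs x" "bounded (range xs)"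
  shows "dist x y \<le> liminf_dist xs y"
proof -
  obtain R where "range xs \<subseteq> cball y R"
    using bounded_imp_subset_cball[OF assms(3)] by blast
  then show ?thesis
    using weak_convergence_dist_le_liminf[OF assms(1,2), of y] by (simp add: liminf_ereal_dist)
qed

lemma integral_tail_inf_dist_le:
  fixes xs :: "nat \<Rightarrow> 'a::metric_space"
  assumes p: "p \<ge> 1" and Ms: "\<And>n. Ms n \<in> Pmom (p - 1)" and M: "M \<in> Pmom (p - 1)"
    and conv: "conv_wq (p - 1) Ms M" and R: "R \<ge> 0" "range xs \<subseteq> cball z R"
    and Wp_le: "\<And>n. Wp p (Ms n) (xs n) z \<le> a n" and a: "a \<longlonglongrightarrow> A"
  shows "(\<integral>y. tail_inf_dist xs N y powr p - dist z y powr p \<partial>M) \<le> A"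
proof -
  define f where "f y = tail_inf_dist xs N y powr p - dist z y powr p" for y
  have q: "p - 1 \<ge> 0" using p by simp
  have cont: "continuous_on UNIV f"
    unfolding f_def using p lipschitz_on_continuous_on[OF lipschitz_tail_inf_dist] tail_inf_dist_nonneg
    by (intro continuous_intros continuous_on_powr') auto
  have bound: "\<bar>f y\<bar> \<le> p * R * 2 powr (p - 1) * R powr (p - 1) + p * R * 2 powr (p - 1) * dpow z y (p - 1)" for y
    unfolding f_def by (rule abs_powr_diff_dist_le[OF p tail_inf_dist_nonneg abs_tail_inf_dist_diff_le[OF R(2)]])
  have C: "0 \<le> p * R * 2 powr (p - 1) * R powr (p - 1)" "0 \<le> p * R * 2 powr (p - 1)"
    using p R(1) by auto
  have "(\<integral>y. f y \<partial>Ms n) \<le> a n" if "n \<ge> N" for n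
  proof -
    have "tail_inf_dist xs N y powr p \<le> dist (xs n) y powr p" for y
      by (rule powr_mono2) (use p tail_inf_dist_nonneg tail_inf_dist_le[OF that] in auto)
    then have "(\<integral>y. f y \<partial>Ms n) \<le> Wp p (Ms n) (xs n) z"
      unfolding Wp_def f_def
      using integrable_Pmom_growth[OF Ms q borel_measurable_Pmom[OF Ms cont] bound]
      by (intro integral_mono integrable_dist_powr_diff[OF p Ms]) (auto simp: f_def)
    then show ?thesis using Wp_le[of n] by simp
  qed
  then show ?thesis
    unfolding f_def[symmetric]
    by (intro LIMSEQ_le[OF conv_wq_growth[OF q Ms M conv cont bound C] a]) blast
qed

lemma integral_liminf_dist_le:
  fixes xs :: "nat \<Rightarrow> 'a::metric_space"
  assumes p: "p \<ge> 1" and Ms: "\<And>n. Ms n \<in> Pmom (p - 1)" and M: "M \<in> Pmom (p - 1)"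
    and conv: "conv_wq (p - 1) Ms M" and bounded: "bounded (range xs)"
    and Wp_le: "\<And>n. Wp p (Ms n) (xs n) z \<le> a n" and a: "a \<longlonglongrightarrow> A"
  shows "integrable M (\<lambda>y. liminf_dist xs y powr p - dist z y powr p)"
    and "(\<integral>y. liminf_dist xs y powr p - dist z y powr p \<partial>M) \<le> A"
proof -
  have q: "p - 1 \<ge> 0" using p by simp
  obtain R where "R \<ge> 0" and R: "range xs \<subseteq> cball z R"
    using bounded_imp_subset_cball[OF bounded] by blast
  define f where "f N y = tail_inf_dist xs N y powr p - dist z y powr p" for N y
  define F where "F y = liminf_dist xs y powr p - dist z y powr p" for y
  define Ca where "Ca = p * R * 2 powr (p - 1) * R powr (p - 1)"
  define Cb where "Cb = p * R * 2 powr (p - 1)"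
  have f_bound: "\<bar>f N y\<bar> \<le> Ca + Cb * dpow z y (p - 1)" for N y
    unfolding f_def Ca_def Cb_def
    by (rule abs_powr_diff_dist_le[OF p tail_inf_dist_nonneg abs_tail_inf_dist_diff_le[OF R]])
  have F_bound: "\<bar>F y\<bar> \<le> Ca + Cb * dpow z y (p - 1)" for y
    unfolding F_def Ca_def Cb_def
    by (rule abs_powr_diff_dist_le[OF p liminf_dist_nonneg[OF R] abs_liminf_dist_diff_le[OF R]])
  have f_meas: "f N \<in> borel_measurable M" for N
    unfolding f_def using p lipschitz_on_continuous_on[OF lipschitz_tail_inf_dist] tail_inf_dist_nonneg
    by (intro borel_measurable_Pmom[OF M] continuous_intros continuous_on_powr') auto
  have f_lim: "(\<lambda>N. f N y) \<longlonglongrightarrow> F y" for y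
    unfolding f_def F_def using p tail_inf_dist_nonneg
    by (intro tendsto_intros tail_inf_dist_LIMSEQ[OF R]) (auto intro: always_eventually)
  have F_meas: "F \<in> borel_measurable M"
    using borel_measurable_LIMSEQ_real[OF f_lim f_meas] .
  show "integrable M (\<lambda>y. liminf_dist xs y powr p - dist z y powr p)"
    using integrable_Pmom_growth[OF M q F_meas F_bound] unfolding F_def .
  have "(\<lambda>N. \<integral>y. f N y \<partial>M) \<longlonglongrightarrow> (\<integral>y. F y \<partial>M)"
  proof (rule integral_dominated_convergence[OF F_meas f_meas])
    show "integrable M (\<lambda>y. Ca + Cb * dpow z y (p - 1))"
      using integrable_Pmom_const[OF M] integrable_Pmom_dpow[OF M q] by auto
    show "AE y in M. norm (f N y) \<le> Ca + Cb * dpow z y (p - 1)" for N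
      using f_bound by (intro AE_I2) simp
  qed (use f_lim in simp)
  then have "(\<integral>y. F y \<partial>M) \<le> A"
    unfolding f_def
    by (rule LIMSEQ_le_const2) (use integral_tail_inf_dist_le[OF p Ms M conv \<open>R \<ge> 0\<close> R Wp_le a] in auto)
  then show "(\<integral>y. liminf_dist xs y powr p - dist z y powr p \<partial>M) \<le> A"
    by (simp add: F_def)
qed

lemma Wp_le_of_weak_limit:
  fixes xs :: "nat \<Rightarrow> 'a::metric_space"
  assumes p: "p \<ge> 1" and w: "is_weak_convergence w"
    and Ms: "\<And>n. Ms n \<in> Pmom (p - 1)" and M: "M \<in> Pmom (p - 1)" and conv: "conv_wq (p - 1) Ms M"
    and wx: "w xs x" and bounded: "bounded (range xs)"
    and Wp_le: "\<And>n. Wp p (Ms n) (xs n) z \<le> a n" and a: "a \<longlonglongrightarrow> A"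
  shows "Wp p M x z \<le> A"
proof -
  note lsc = integral_liminf_dist_le[OF p Ms M conv bounded Wp_le a]
  have "Wp p M x z \<le> (\<integral>y. liminf_dist xs y powr p - dist z y powr p \<partial>M)"
    unfolding Wp_def
  proof (rule integral_mono[OF integrable_dist_powr_diff[OF p M] lsc(1)])
    show "dist x y powr p - dist z y powr p \<le> liminf_dist xs y powr p - dist z y powr p" for y
      using p dist_le_liminf_dist[OF w wx bounded, of y] by (simp add: powr_mono2)
  qed
  also have "\<dots> \<le> A" by (rule lsc(2))
  finally show ?thesis .
qed

lemma liminf_dist_eq_dist:
  fixes xs :: "nat \<Rightarrow> 'a::metric_space"
  assumes p: "p \<ge> 1" and w: "is_weak_convergence w"
    and Ms: "\<And>n. Ms n \<in> Pmom (p - 1)" and M: "M \<in> Pmom (p - 1)" and conv: "conv_wq (p - 1) Ms M"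
    and wx: "w xs x" and bounded: "bounded (range xs)"
    and Wp_le: "\<And>n. Wp p (Ms n) (xs n) x \<le> a n" and a: "a \<longlonglongrightarrow> 0"
  shows "\<exists>y. liminf_dist xs y = dist x y"
proof -
  define G where "G = liminf_dist xs"
  note lsc = integral_liminf_dist_le[OF p Ms M conv bounded Wp_le a, folded G_def]
  have G: "dist x y \<le> G y" for y
    unfolding G_def by (rule dist_le_liminf_dist[OF w wx bounded])
  then have nonneg: "0 \<le> G y powr p - dist x y powr p" for y
    using p by (simp add: powr_mono2)
  then have "0 \<le> (\<integral>y. G y powr p - dist x y powr p \<partial>M)"
    by (intro integral_nonneg_AE AE_I2)
  then have "(\<integral>y. G y powr p - dist x y powr p \<partial>M) = 0"
    using lsc(2) by linarith
  then have "AE y in M. G y powr p - dist x y powr p = 0"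
    using integral_nonneg_eq_0_iff_AE[OF lsc(1)] nonneg by simp
  then have "\<exists>y. G y powr p - dist x y powr p = 0"
  proof (rule contrapos_pp)
    assume "\<nexists>y. G y powr p - dist x y powr p = 0"
    then show "\<not> (AE y in M. G y powr p - dist x y powr p = 0)"
      using prob_space.AE_False[OF Pmom_prob_space[OF M]] by simp
  qed
  then obtain y where y: "G y powr p = dist x y powr p" by auto
  have "G y = dist x y"
  proof (rule ccontr)
    assume "G y \<noteq> dist x y"
    then have "dist x y powr p < G y powr p"
      using p G[of y] by (intro powr_less_mono2) auto
    then show False using y by simp
  qed
  then show ?thesis unfolding G_def by blast
qed

lemma weak_limit_LIMSEQ_subseq:
  fixes xs :: "nat \<Rightarrow> 'a::metric_space"
  assumes p: "p \<ge> 1" and w: "is_weak_convergence w"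
    and Ms: "\<And>n. Ms n \<in> Pmom (p - 1)" and M: "M \<in> Pmom (p - 1)" and conv: "conv_wq (p - 1) Ms M"
    and wx: "w xs x" and bounded: "bounded (range xs)"
    and Wp_le: "\<And>n. Wp p (Ms n) (xs n) x \<le> a n" and a: "a \<longlonglongrightarrow> 0"
  shows "\<exists>r. strict_mono r \<and> (xs \<circ> r) \<longlonglongrightarrow> x"
proof -
  obtain y where y: "liminf_dist xs y = dist x y"
    using liminf_dist_eq_dist[OF p w Ms M conv wx bounded Wp_le a] by blast
  obtain R where "range xs \<subseteq> cball y R"
    using bounded_imp_subset_cball[OF bounded] by blast
  then have liminf: "liminf (\<lambda>n. ereal (dist (xs n) y)) = ereal (dist x y)"
    using y by (simp add: liminf_ereal_dist)
  obtain r where r: "strict_mono r" "((\<lambda>n. ereal (dist (xs n) y)) \<circ> r) \<longlonglongrightarrow> ereal (dist x y)"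
    using liminf_subseq_lim[of "\<lambda>n. ereal (dist (xs n) y)"] unfolding liminf by blast
  then have "(\<lambda>n. dist ((xs \<circ> r) n) y) \<longlonglongrightarrow> dist x y"
    by (simp add: comp_def)
  then have "(xs \<circ> r) \<longlonglongrightarrow> x"
    using weak_convergence_LIMSEQ[OF w weak_convergence_subseq[OF w wx r(1)]] by blast
  then show ?thesis using r(1) by blast
qed

section \<open>Minimisers\<close>

lemma approx_minimizers_bounded:
  fixes xs :: "nat \<Rightarrow> 'a::metric_space"
  assumes p: "p \<ge> 1" and Ms: "\<And>n. Ms n \<in> Pmom (p - 1)" and M: "M \<in> Pmom (p - 1)"
    and conv: "conv_wq (p - 1) Ms M"
    and approx: "\<And>n z. Wp p (Ms n) (xs n) z \<le> \<epsilon> n" and \<epsilon>: "\<epsilon> \<longlonglongrightarrow> 0"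
  shows "bounded (range xs)"
proof -
  obtain R N where far: "\<And>n x. n \<ge> N \<Longrightarrow> R \<le> dist x (xs 0) \<Longrightarrow> 1/2 \<le> Wp p (Ms n) x (xs 0)"
    using Wp_coercive[OF p Ms M conv, of "xs 0"] by blast
  obtain N' where small: "\<And>n. n \<ge> N' \<Longrightarrow> \<epsilon> n < 1/2"
    using order_tendstoD(2)[OF \<epsilon>, of "1/2"] by (auto simp: eventually_sequentially)
  have near: "xs n \<in> cball (xs 0) R" if "n \<ge> max N N'" for n
    using far[of n "xs n"] small[of n] approx[of n "xs 0"] that by (force simp: dist_commute)
  have "range xs \<subseteq> xs ` {..<max N N'} \<union> cball (xs 0) R"
  proof
    fix y assume "y \<in> range xs"
    then obtain n where "y = xs n" by auto
    then show "y \<in> xs ` {..<max N N'} \<union> cball (xs 0) R"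
      using near[of n] by (cases "n < max N N'") (auto simp: not_less)
  qed
  then show ?thesis
    by (rule bounded_subset[rotated]) (auto intro: finite_imp_bounded)
qed

lemma approx_minimizers_subseq:
  fixes xs :: "nat \<Rightarrow> 'a::metric_space" and w :: "(nat \<Rightarrow> 'a) \<Rightarrow> 'a \<Rightarrow> bool"
  assumes p: "p \<ge> 1" and w: "is_weak_convergence w"
    and Ms: "\<And>n. Ms n \<in> Pmom (p - 1)" and M: "M \<in> Pmom (p - 1)" and conv: "conv_wq (p - 1) Ms M"
    and approx: "\<And>n z. Wp p (Ms n) (xs n) z \<le> \<epsilon> n" and \<epsilon>: "\<epsilon> \<longlonglongrightarrow> 0"
  shows "\<exists>r x. strict_mono r \<and> x \<in> Mp p M \<and> (xs \<circ> r) \<longlonglongrightarrow> x"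
proof -
  have bounded: "bounded (range xs)"
    by (rule approx_minimizers_bounded[OF p Ms M conv approx \<epsilon>])
  obtain r x where r: "strict_mono r" and wx: "w (xs \<circ> r) x"
    using weak_convergence_bounded_subseq[OF w bounded] by blast
  note sub = conv_wq_subseq[OF conv r] LIMSEQ_subseq_LIMSEQ[OF \<epsilon> r]
  have bounded_r: "bounded (range (xs \<circ> r))"
    using bounded by (rule bounded_subset) auto
  have Ms_r: "(Ms \<circ> r) n \<in> Pmom (p - 1)" for n
    using Ms by simp
  have approx_r: "Wp p ((Ms \<circ> r) n) ((xs \<circ> r) n) z \<le> (\<epsilon> \<circ> r) n" for n z
    using approx by simp
  have "x \<in> Mp p M"
    unfolding Mp_def
    using Wp_le_of_weak_limit[OF p w Ms_r M sub(1) wx bounded_r approx_r sub(2)] by auto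
  moreover obtain r' where "strict_mono r'" "(xs \<circ> r \<circ> r') \<longlonglongrightarrow> x"
    using weak_limit_LIMSEQ_subseq[OF p w Ms_r M sub(1) wx bounded_r approx_r sub(2)] by blast
  ultimately show ?thesis
    using strict_mono_o[OF r \<open>strict_mono r'\<close>] by (metis comp_assoc)
qed

lemma bdd_below_Wp:
  assumes p: "p \<ge> 1" and M: "M \<in> Pmom (p - 1)"
  shows "bdd_below (range (\<lambda>x. Wp p M x z))"
proof -
  define I where "I = (\<integral>y. dpow z y (p - 1) \<partial>M)"
  have "\<exists>R N. \<forall>n\<ge>N. \<forall>x. R \<le> dist x z \<longrightarrow> 1/2 \<le> Wp p M x z"
    using Wp_coercive[OF p _ M conv_wq_const] M by blast
  then obtain R where far: "\<And>x. R \<le> dist x z \<Longrightarrow> 1/2 \<le> Wp p M x z"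
    by blast
  have "I \<ge> 0" unfolding I_def by (intro integral_nonneg_AE AE_I2) (simp add: dpow_nonneg)
  have "min (1/2) (- (p * \<bar>R\<bar> * I)) \<le> Wp p M x z" for x
  proof (cases "R \<le> dist x z")
    case True
    then show ?thesis using far[of x] by simp
  next
    case False
    then have "p * dist x z * I \<le> p * \<bar>R\<bar> * I"
      using p \<open>I \<ge> 0\<close> by (intro mult_right_mono mult_left_mono) auto
    then show ?thesis using Wp_ge[OF p M, of x z] unfolding I_def by simp
  qed
  then show ?thesis by (rule bdd_belowI2)
qed

lemma Mp_nonempty:
  fixes M :: "'a::metric_space measure" and w :: "(nat \<Rightarrow> 'a) \<Rightarrow> 'a \<Rightarrow> bool"
  assumes p: "p \<ge> 1" and w: "is_weak_convergence w" and M: "M \<in> Pmom (p - 1)"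
  shows "Mp p M \<noteq> {}"
proof -
  fix z :: 'a
  define F where "F x = Wp p M x z" for x
  define m where "m = Inf (range F)"
  have bdd: "bdd_below (range F)"
    unfolding F_def by (rule bdd_below_Wp[OF p M])
  have "\<exists>y\<in>range F. y < m + inverse (real (Suc n))" for n
    unfolding m_def by (rule cInf_lessD) auto
  then have "\<exists>x. F x < m + inverse (real (Suc n))" for n
    by blast
  then obtain xs where xs: "\<And>n. F (xs n) < m + inverse (real (Suc n))"
    by metis
  have approx: "Wp p M (xs n) z' \<le> inverse (real (Suc n))" for n z'
  proof -
    have "m \<le> F z'" unfolding m_def by (rule cInf_lower[OF _ bdd]) simp
    then show ?thesis using xs[of n] Wp_diff[OF p M, of "xs n" z' z] unfolding F_def by simp
  qed
  show ?thesis
    using approx_minimizers_subseq[OF p w M M conv_wq_const approx LIMSEQ_inverse_real_of_nat] by blast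
qed

lemma Mp_compact:
  fixes M :: "'a::metric_space measure" and w :: "(nat \<Rightarrow> 'a) \<Rightarrow> 'a \<Rightarrow> bool"
  assumes p: "p \<ge> 1" and w: "is_weak_convergence w" and M: "M \<in> Pmom (p - 1)"
  shows "compact (Mp p M)"
  unfolding compact_eq_seq_compact_metric seq_compact_def
proof (intro allI impI)
  fix xs :: "nat \<Rightarrow> 'a" assume "\<forall>n. xs n \<in> Mp p M"
  then have "Wp p M (xs n) z \<le> 0" for n z by (simp add: Mp_def)
  then show "\<exists>x\<in>Mp p M. \<exists>r. strict_mono r \<and> (xs \<circ> r) \<longlonglongrightarrow> x"
    using approx_minimizers_subseq[OF p w, of "\<lambda>_. M", OF M M conv_wq_const _ tendsto_const] by blast
qed

lemma Mp_eventually_near: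
  fixes Ms :: "nat \<Rightarrow> 'a::metric_space measure" and w :: "(nat \<Rightarrow> 'a) \<Rightarrow> 'a \<Rightarrow> bool"
  assumes p: "p \<ge> 1" and w: "is_weak_convergence w"
    and Ms: "\<And>n. Ms n \<in> Pmom (p - 1)" and M: "M \<in> Pmom (p - 1)" and conv: "conv_wq (p - 1) Ms M"
    and "e > 0"
  shows "\<forall>\<^sub>F n in sequentially. \<forall>x\<in>Mp p (Ms n). \<exists>y\<in>Mp p M. dist x y < e"
proof (rule ccontr)
  let ?far = "\<lambda>n. \<exists>x. x \<in> Mp p (Ms n) \<and> (\<forall>y\<in>Mp p M. e \<le> dist x y)"
  assume "\<not> ?thesis"
  then have "\<exists>\<^sub>F n in sequentially. ?far n"
    by (simp add: not_eventually not_less Bex_def Ball_def)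
  then have "infinite {n. ?far n}"
    unfolding cofinite_eq_sequentially[symmetric] frequently_cofinite .
  from infinite_enumerate[OF this] obtain r :: "nat \<Rightarrow> nat"
    where r: "strict_mono r" "\<forall>k. r k \<in> {n. ?far n}"
    by blast
  then have "\<forall>k. ?far (r k)" by simp
  from choice[OF this] obtain xs where xs: "\<forall>k. xs k \<in> Mp p (Ms (r k)) \<and> (\<forall>y\<in>Mp p M. e \<le> dist (xs k) y)"
    by blast
  have "\<exists>r' x. strict_mono r' \<and> x \<in> Mp p M \<and> (xs \<circ> r') \<longlonglongrightarrow> x"
  proof (rule approx_minimizers_subseq[where \<epsilon>="\<lambda>_. 0", OF p w _ M conv_wq_subseq[OF conv r(1)]])
    show "(Ms \<circ> r) k \<in> Pmom (p - 1)" for k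
      using Ms by simp
    show "Wp p ((Ms \<circ> r) k) (xs k) z \<le> 0" for k z
      using xs by (simp add: Mp_def)
  qed simp
  then obtain r' x where "x \<in> Mp p M" and lim: "(xs \<circ> r') \<longlonglongrightarrow> x"
    by blast
  have "\<forall>\<^sub>F k in sequentially. dist ((xs \<circ> r') k) x < e"
    using tendstoD[OF lim \<open>e > 0\<close>] .
  then obtain k where "dist (xs (r' k)) x < e"
    by (auto simp: eventually_sequentially)
  moreover have "e \<le> dist (xs (r' k)) x"
    using xs \<open>x \<in> Mp p M\<close> by blast
  ultimately show False by simp
qed

lemma Mp_in_Kset:
  fixes M :: "'a::metric_space measure" and w :: "(nat \<Rightarrow> 'a) \<Rightarrow> 'a \<Rightarrow> bool"
  assumes "p \<ge> 1" "is_weak_convergence w" "M \<in> Pmom (p - 1)"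
  shows "Mp p M \<in> Kset"
  using Mp_nonempty[OF assms] Mp_compact[OF assms] by (simp add: Kset_def)

section \<open>The upper Hausdorff topology\<close>

lemma dvec_infdist: "S \<noteq> {} \<Longrightarrow> dvec A S = (SUP x\<in>A. infdist x S)"
  unfolding dvec_def infdist_def by simp

lemma dvec_self: "S \<noteq> {} \<Longrightarrow> dvec S S = 0"
  by (simp add: dvec_infdist)

lemma dvec_le:
  fixes A B S :: "'a::metric_space set"
  assumes "A \<noteq> {}" "compact B" "S \<noteq> {}" and near: "\<forall>x\<in>A. \<exists>b\<in>B. dist x b < e"
  shows "dvec A S \<le> dvec B S + e"
  unfolding dvec_infdist[OF assms(3)]
proof (rule cSUP_least[OF assms(1)])
  fix x assume "x \<in> A"
  then obtain b where b: "b \<in> B" "dist x b < e" using near by blast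
  have "bdd_above ((\<lambda>x. infdist x S) ` B)"
    using assms(2) by (intro bounded_imp_bdd_above compact_imp_bounded compact_continuous_image continuous_intros)
  then have "infdist b S \<le> (SUP x\<in>B. infdist x S)" using b(1) by (rule cSUP_upper2) simp
  moreover have "infdist x S \<le> infdist b S + dist x b" by (rule infdist_triangle)
  ultimately show "infdist x S \<le> (SUP x\<in>B. infdist x S) + e" using b(2) by simp
qed

lemma eventually_in_dvec_ball:
  assumes S: "S \<in> Kset" and Ss: "\<And>n. Ss n \<in> Kset" and T: "T \<in> Kset" and "S \<in> dvec_ball r T"
    and near: "\<And>e. e > 0 \<Longrightarrow> \<forall>\<^sub>F n in sequentially. \<forall>x\<in>Ss n. \<exists>y\<in>S. dist x y < e"
  shows "\<forall>\<^sub>F n in sequentially. Ss n \<in> dvec_ball r T"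
proof -
  have lt: "dvec S T < r" using \<open>S \<in> dvec_ball r T\<close> by (simp add: dvec_ball_def)
  define e where "e = (r - dvec S T) / 2"
  have e: "e > 0" "dvec S T + e < r" using lt unfolding e_def by (simp_all add: field_simps)
  show ?thesis
    using near[OF e(1)]
  proof eventually_elim
    case (elim n)
    then have "dvec (Ss n) T \<le> dvec S T + e"
      using Ss[of n] S T unfolding Kset_def by (intro dvec_le) auto
    then show ?case using Ss[of n] e(2) by (simp add: dvec_ball_def)
  qed
qed

lemma limitin_dvec_topologyI:
  assumes S: "S \<in> Kset" and Ss: "\<And>n. Ss n \<in> Kset"
    and near: "\<And>e. e > 0 \<Longrightarrow> \<forall>\<^sub>F n in sequentially. \<forall>x\<in>Ss n. \<exists>y\<in>S. dist x y < e"
  shows "limitin dvec_topology Ss S sequentially"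
proof -
  define \<B> :: "'a set set set" where "\<B> = {dvec_ball r T |r T. T \<in> Kset \<and> r \<ge> 0}"
  have "S \<in> dvec_ball 1 S"
    using S dvec_self[of S] unfolding dvec_ball_def Kset_def by auto
  moreover have "dvec_ball 1 S \<in> \<B>"
    using S unfolding \<B>_def by (intro CollectI exI[of _ 1] exI[of _ S]) simp
  ultimately have top: "S \<in> \<Union>\<B>" by blast
  have "\<forall>\<^sub>F n in sequentially. Ss n \<in> U" if "generate_topology_on \<B> U" "S \<in> U" for U
    using that
  proof (induction U rule: generate_topology_on.induct)
    case (Int a b)
    then show ?case by (auto intro: eventually_conj)
  next
    case (UN K)
    then obtain k where "k \<in> K" "S \<in> k" by auto
    with UN.IH have "\<forall>\<^sub>F n in sequentially. Ss n \<in> k" by blast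
    then show ?case by (rule eventually_mono) (use \<open>k \<in> K\<close> in blast)
  next
    case (Basis s)
    then obtain r T where s: "s = dvec_ball r T" and T: "T \<in> Kset"
      unfolding \<B>_def by auto
    show ?case
      unfolding s by (rule eventually_in_dvec_ball[OF S Ss T _ near]) (use Basis.prems s in simp_all)
  qed simp
  then show ?thesis
    unfolding limitin_def dvec_topology_def \<B>_def[symmetric] openin_topology_generated_by_iff
      topology_generated_by_topspace
    using top by blast
qed

theorem corollary3p13:
  fixes p :: real
  assumes "separable_space TYPE('a::metric_space)"
    and "admits_weak_convergence TYPE('a)"
    and "p \<ge> 1"
  shows "(\<forall>M \<in> (Pmom (p - 1) :: 'a measure set). Mp p M \<in> Kset) \<and>
         (\<forall>Ms M. (\<forall>n. Ms n \<in> (Pmom (p - 1) :: 'a measure set)) \<and> M \<in> Pmom (p - 1) \<and>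
                 conv_wq (p - 1) Ms M \<longrightarrow>
                 limitin dvec_topology (\<lambda>n. Mp p (Ms n)) (Mp p M) sequentially)"
proof -
  obtain w :: "(nat \<Rightarrow> 'a) \<Rightarrow> 'a \<Rightarrow> bool" where w: "is_weak_convergence w"
    using assms(2) unfolding admits_weak_convergence_def by blast
  note K = Mp_in_Kset[OF assms(3) w]
  show ?thesis
  proof (intro conjI ballI allI impI)
    fix M :: "'a measure" assume "M \<in> Pmom (p - 1)"
    then show "Mp p M \<in> Kset" by (rule K)
  next
    fix Ms and M :: "'a measure"
    assume "(\<forall>n. Ms n \<in> Pmom (p - 1)) \<and> M \<in> Pmom (p - 1) \<and> conv_wq (p - 1) Ms M"
    then have Ms: "\<And>n. Ms n \<in> Pmom (p - 1)" and M: "M \<in> Pmom (p - 1)" and conv: "conv_wq (p - 1) Ms M"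
      by auto
    show "limitin dvec_topology (\<lambda>n. Mp p (Ms n)) (Mp p M) sequentially"
      using Mp_eventually_near[OF assms(3) w Ms M conv]
      by (rule limitin_dvec_topologyI[OF K[OF M] K[OF Ms]])
  qed
qed

end
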